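(* Let $Y\subset D_2(H)$ be the subgroup generated by all $T(a_i,a_j;a_k,a_l)$, all $⑦_{i,j,k,l}:=T(a_i,a_j;b_k,a_l)$ ($1\le i,j,k,l\le g$) and all $⑧_{i,j}:=a_i\odot a_j$ ($i\ne j$), and let $P:=\operatorname{Ker}(\operatorname{Tr}^{as}|_Y:Y\to\Lambda^2(H/2H))$ (the image lies in the span of the $a_i\wedge a_j$ mod 2). Then $P$ is generated by: all $T(a_i,a_j;a_k,a_l)$; all $⑦_{i,j,k,l}$ with $k\notin\{i,j,l\}$; all $⑦_{i,k,k,i}$ with $i\ne k$; and, for both choices of sign, the elements $$⑦_{i,k,k,m}\pm⑦_{m,k,k,i},\qquad ⑦_{i,k,k,l}\pm⑦_{i,k',k',l},\qquad ⑦_{i,k,k,l}\pm⑧_{i,l},$$ where $i\notin\{k,k',l\}$ and $m\ne k$.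
   Context: Let $g\ge 2$, $\Sigma_{g,1}$ a compact connected oriented surface of genus $g$ with one boundary component, $H=H_1(\Sigma_{g,1};\mathbb Z)$ with intersection form $\omega$, $\mathcal L(H)$ the free Lie ring on $H$ embedded in $T(H)$ via $[x,y]=x\otimes y-y\otimes x$, $D_2(H):=\ker(H\otimes\mathcal L_3(H)\to\mathcal L_4(H),\ h\otimes u\mapsto[h,u])$. Fix a symplectic basis $(a_1,\dots,a_g,b_1,\dots,b_g)$ of $H$ ($\omega(a_i,b_j)=\delta_{ij}$, $\omega(a_i,a_j)=\omega(b_i,b_j)=0$). For $a,b,c,d\in H$, $T(a,b;c,d):=a\otimes[b,[c,d]]+b\otimes[[c,d],a]+c\otimes[d,[a,b]]+d\otimes[[a,b],c]$ and $a\odot b:=a\otimes[b,[a,b]]+b\otimes[[a,b],a]$ (both in $D_2(H)$). $\operatorname{Tr}^{as}:D_2(H)\to\Lambda^2(H/2H)$ is the homomorphism $T(a,b;c,d)\mapsto\omega(a,d)\,b\wedge c+\omega(a,c)\,b\wedge d+\omega(b,d)\,a\wedge c+\omega(b,c)\,a\wedge d$, $a\odot b\mapsto(1+\omega(a,b))\,a\wedge b$ (coefficients mod 2). *)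

theory Defs
  imports Main "HOL-Library.Function_Algebras" "HOL-Library.Z2"
begin

(* H = Z^{2g}: vectors nat => int supported on {..<2g}.
   H^{\<otimes>k} is modelled by k-ary integer arrays supported on {..<2g}^k;
   L(H) sits inside T(H) via [x,y] = x\<otimes>y - y\<otimes>x. *)

type_synonym hvec = "nat \<Rightarrow> int"
type_synonym ten2 = "nat \<Rightarrow> nat \<Rightarrow> int"
type_synonym ten3 = "nat \<Rightarrow> nat \<Rightarrow> nat \<Rightarrow> int"
type_synonym ten4 = "nat \<Rightarrow> nat \<Rightarrow> nat \<Rightarrow> nat \<Rightarrow> int"
(* Lambda^2(H/2H) modelled as alternating F_2-matrices: u\<and>v \<mapsto> (u_p v_q + u_q v_p)_{p,q} *)
type_synonym lam2 = "nat \<Rightarrow> nat \<Rightarrow> bit"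

definition Hg :: "nat \<Rightarrow> hvec set" where
  "Hg g = {x. \<forall>p\<ge>2*g. x p = 0}"

definition evec :: "nat \<Rightarrow> hvec" where
  "evec j = (\<lambda>p. if p = j then 1 else 0)"

definition avec :: "nat \<Rightarrow> hvec" where "avec i = evec i"
definition bvec :: "nat \<Rightarrow> nat \<Rightarrow> hvec" where "bvec g i = evec (g + i)"

definition omega :: "nat \<Rightarrow> hvec \<Rightarrow> hvec \<Rightarrow> int" where
  "omega g x y = (\<Sum>i<g. x i * y (g + i) - x (g + i) * y i)"

inductive_set zspan :: "'a::ab_group_add set \<Rightarrow> 'a set" for S where
  zspan_zero: "0 \<in> zspan S"
| zspan_gen: "x \<in> S \<Longrightarrow> x \<in> zspan S"
| zspan_add: "x \<in> zspan S \<Longrightarrow> y \<in> zspan S \<Longrightarrow> x + y \<in> zspan S"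
| zspan_neg: "x \<in> zspan S \<Longrightarrow> - x \<in> zspan S"

definition br11 :: "hvec \<Rightarrow> hvec \<Rightarrow> ten2" where
  "br11 x y = (\<lambda>p q. x p * y q - y p * x q)"

definition br12 :: "hvec \<Rightarrow> ten2 \<Rightarrow> ten3" where
  "br12 x u = (\<lambda>p q r. x p * u q r - u p q * x r)"

definition br21 :: "ten2 \<Rightarrow> hvec \<Rightarrow> ten3" where
  "br21 u x = (\<lambda>p q r. u p q * x r - x p * u q r)"

definition tens13 :: "hvec \<Rightarrow> ten3 \<Rightarrow> ten4" where
  "tens13 x v = (\<lambda>p q r s. x p * v q r s)"

(* L_3(H) inside H^{\<otimes>3}, H \<otimes> L_3(H) inside H^{\<otimes>4} *)
definition L3 :: "nat \<Rightarrow> ten3 set" where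
  "L3 g = zspan {br12 x (br11 y z) | x y z. x \<in> Hg g \<and> y \<in> Hg g \<and> z \<in> Hg g}"

definition HL3 :: "nat \<Rightarrow> ten4 set" where
  "HL3 g = zspan {tens13 h u | h u. h \<in> Hg g \<and> u \<in> L3 g}"

(* bracket H \<otimes> L_3 \<rightarrow> L_4 \<subseteq> H^{\<otimes>4}, h\<otimes>u \<mapsto> h\<otimes>u - u\<otimes>h *)
definition brk4 :: "ten4 \<Rightarrow> ten4" where
  "brk4 t = (\<lambda>p q r s. t p q r s - t s p q r)"

definition D2 :: "nat \<Rightarrow> ten4 set" where
  "D2 g = {t \<in> HL3 g. brk4 t = 0}"

definition Tel :: "hvec \<Rightarrow> hvec \<Rightarrow> hvec \<Rightarrow> hvec \<Rightarrow> ten4" where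
  "Tel a b c d =
     tens13 a (br12 b (br11 c d)) + tens13 b (br21 (br11 c d) a)
   + tens13 c (br12 d (br11 a b)) + tens13 d (br21 (br11 a b) c)"

definition odot :: "hvec \<Rightarrow> hvec \<Rightarrow> ten4" where
  "odot a b = tens13 a (br12 b (br11 a b)) + tens13 b (br21 (br11 a b) a)"

definition wedge2 :: "hvec \<Rightarrow> hvec \<Rightarrow> lam2" where
  "wedge2 u v = (\<lambda>p q. of_int (u p) * of_int (v q) + of_int (u q) * of_int (v p))"

definition smul2 :: "int \<Rightarrow> lam2 \<Rightarrow> lam2" where
  "smul2 c M = (\<lambda>p q. of_int c * M p q)"

definition is_Tr_as :: "nat \<Rightarrow> (ten4 \<Rightarrow> lam2) \<Rightarrow> bool" where
  "is_Tr_as g tr \<longleftrightarrow>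
     (\<forall>s\<in>D2 g. \<forall>t\<in>D2 g. tr (s + t) = tr s + tr t) \<and>
     (\<forall>a\<in>Hg g. \<forall>b\<in>Hg g. \<forall>c\<in>Hg g. \<forall>d\<in>Hg g.
        tr (Tel a b c d) =
          smul2 (omega g a d) (wedge2 b c) + smul2 (omega g a c) (wedge2 b d)
        + smul2 (omega g b d) (wedge2 a c) + smul2 (omega g b c) (wedge2 a d)) \<and>
     (\<forall>a\<in>Hg g. \<forall>b\<in>Hg g. tr (odot a b) = smul2 (1 + omega g a b) (wedge2 a b))"

definition seven :: "nat \<Rightarrow> nat \<Rightarrow> nat \<Rightarrow> nat \<Rightarrow> nat \<Rightarrow> ten4" where
  "seven g i j k l = Tel (avec i) (avec j) (bvec g k) (avec l)"

definition eight :: "nat \<Rightarrow> nat \<Rightarrow> ten4" where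
  "eight i j = odot (avec i) (avec j)"

definition Ygens :: "nat \<Rightarrow> ten4 set" where
  "Ygens g =
     {Tel (avec i) (avec j) (avec k) (avec l) | i j k l. i < g \<and> j < g \<and> k < g \<and> l < g}
   \<union> {seven g i j k l | i j k l. i < g \<and> j < g \<and> k < g \<and> l < g}
   \<union> {eight i j | i j. i < g \<and> j < g \<and> i \<noteq> j}"

definition Ysub :: "nat \<Rightarrow> ten4 set" where
  "Ysub g = zspan (Ygens g)"

definition Pgens :: "nat \<Rightarrow> ten4 set" where
  "Pgens g =
     {Tel (avec i) (avec j) (avec k) (avec l) | i j k l. i < g \<and> j < g \<and> k < g \<and> l < g}
   \<union> {seven g i j k l | i j k l. i < g \<and> j < g \<and> k < g \<and> l < g \<and> k \<notin> {i, j, l}}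
   \<union> {seven g i k k i | i k. i < g \<and> k < g \<and> i \<noteq> k}
   \<union> {seven g i k k m + seven g m k k i | i k m. i < g \<and> k < g \<and> m < g \<and> i \<noteq> k \<and> m \<noteq> k}
   \<union> {seven g i k k m - seven g m k k i | i k m. i < g \<and> k < g \<and> m < g \<and> i \<noteq> k \<and> m \<noteq> k}
   \<union> {seven g i k k l + seven g i k' k' l | i k k' l. i < g \<and> k < g \<and> k' < g \<and> l < g \<and> i \<notin> {k, k', l}}
   \<union> {seven g i k k l - seven g i k' k' l | i k k' l. i < g \<and> k < g \<and> k' < g \<and> l < g \<and> i \<notin> {k, k', l}}
   \<union> {seven g i k k l + eight i l | i k l. i < g \<and> k < g \<and> l < g \<and> i \<notin> {k, l}}
   \<union> {seven g i k k l - eight i l | i k l. i < g \<and> k < g \<and> l < g \<and> i \<notin> {k, l}}"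

end

theory Submission
  imports Defs
begin

text \<open>
  On \<open>Y\<close> the trace only sees the coefficients of the \<open>a\<^sub>i \<and> a\<^sub>j\<close>, which suggests the
  section \<open>\<sigma>(a\<^sub>i \<and> a\<^sub>j) = 8\<^sub>i\<^sub>j\<close> (writing \<open>7\<close>, \<open>8\<close> for the circled generators). Since
  \<open>2\<cdot>8\<^sub>i\<^sub>l = (7\<^sub>i\<^sub>l\<^sub>l\<^sub>l + 8\<^sub>i\<^sub>l) - (7\<^sub>i\<^sub>l\<^sub>l\<^sub>l - 8\<^sub>i\<^sub>l)\<close> lies in the span of the proposed
  generators, \<open>\<sigma>\<close> is additive modulo that span, and a case analysis using
  antisymmetry and the Jacobi identity of \<open>T\<close> shows \<open>y \<equiv> \<sigma>(Tr\<^sup>a\<^sup>s y)\<close> for every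
  generator \<open>y\<close> of \<open>Y\<close>. The congruence then holds on all of \<open>Y\<close>, so the kernel lies
  in the span. Conversely each proposed generator is a sum or difference of two
  elements of \<open>Y\<close> with equal trace, hence has trace zero because \<open>\<Lambda>\<^sup>2(H/2H)\<close> has
  exponent 2.
\<close>

lemma zspan_diff: "x \<in> zspan S \<Longrightarrow> y \<in> zspan S \<Longrightarrow> x - y \<in> zspan S"
  by (metis diff_conv_add_uminus zspan_add zspan_neg)

lemma zspan_sum: "finite A \<Longrightarrow> (\<And>x. x \<in> A \<Longrightarrow> f x \<in> zspan S) \<Longrightarrow> sum f A \<in> zspan S"
  by (induction A rule: finite_induct) (auto intro: zspan.intros)

lemma zspan_subset_subgroup:
  assumes "S \<subseteq> A" "0 \<in> A"
    and "\<And>x y. x \<in> A \<Longrightarrow> y \<in> A \<Longrightarrow> x + y \<in> A" "\<And>x. x \<in> A \<Longrightarrow> - x \<in> A"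
  shows "zspan S \<subseteq> A"
proof
  show "x \<in> A" if "x \<in> zspan S" for x
    using that by induction (use assms in auto)
qed

lemma additive_on_zspan_zero:
  fixes f :: "'a::ab_group_add \<Rightarrow> 'b::ab_group_add"
  assumes "\<And>x y. x \<in> zspan S \<Longrightarrow> y \<in> zspan S \<Longrightarrow> f (x + y) = f x + f y"
  shows "f 0 = 0"
  using assms[OF zspan_zero zspan_zero] by simp

lemma additive_on_zspan_neg:
  fixes f :: "'a::ab_group_add \<Rightarrow> 'b::ab_group_add"
  assumes add: "\<And>x y. x \<in> zspan S \<Longrightarrow> y \<in> zspan S \<Longrightarrow> f (x + y) = f x + f y"
    and x: "x \<in> zspan S"
  shows "f (- x) = - f x"
  using add[OF zspan_neg[OF x] x] additive_on_zspan_zero[OF add]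
  by (simp add: eq_neg_iff_add_eq_0)

lemma zspan_subset_kernel:
  fixes f :: "'a::ab_group_add \<Rightarrow> 'b::ab_group_add"
  assumes add: "\<And>x y. x \<in> zspan Y \<Longrightarrow> y \<in> zspan Y \<Longrightarrow> f (x + y) = f x + f y"
    and P: "\<And>x. x \<in> P \<Longrightarrow> x \<in> zspan Y \<and> f x = 0"
  shows "zspan P \<subseteq> {y \<in> zspan Y. f y = 0}"
  by (rule zspan_subset_subgroup)
    (use P add additive_on_zspan_zero[OF add] additive_on_zspan_neg[OF add]
      in \<open>auto intro: zspan.intros\<close>)

lemma zspan_congruent_section:
  fixes f :: "'a::ab_group_add \<Rightarrow> 'b::ab_group_add" and \<sigma> :: "'b \<Rightarrow> 'a"
  assumes add: "\<And>x y. x \<in> zspan Y \<Longrightarrow> y \<in> zspan Y \<Longrightarrow> f (x + y) = f x + f y"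
    and \<sigma>_add: "\<And>u v. \<sigma> (u + v) - \<sigma> u - \<sigma> v \<in> zspan P"
    and gen: "\<And>y. y \<in> Y \<Longrightarrow> y - \<sigma> (f y) \<in> zspan P"
    and y: "y \<in> zspan Y"
  shows "y - \<sigma> (f y) \<in> zspan P"
proof -
  have \<sigma>_zero: "\<sigma> 0 \<in> zspan P"
    using zspan_neg[OF \<sigma>_add[of 0 0]] by simp
  have \<sigma>_neg: "\<sigma> (- u) + \<sigma> u \<in> zspan P" for u
    using zspan_diff[OF \<sigma>_zero \<sigma>_add[of "- u" u]] by (simp add: add.commute)
  from y show ?thesis
  proof induction
    show "0 - \<sigma> (f 0) \<in> zspan P"
      using zspan_neg[OF \<sigma>_zero] by (simp add: additive_on_zspan_zero[OF add])
  next
    case (zspan_gen x)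
    then show ?case by (rule gen)
  next
    case (zspan_add x y)
    have "(x - \<sigma> (f x)) + (y - \<sigma> (f y)) - (\<sigma> (f x + f y) - \<sigma> (f x) - \<sigma> (f y)) \<in> zspan P"
      by (rule zspan_diff[OF zspan.zspan_add[OF zspan_add.IH] \<sigma>_add])
    then show ?case
      by (simp add: add zspan_add.hyps algebra_simps)
  next
    case (zspan_neg x)
    have "- (x - \<sigma> (f x)) - (\<sigma> (- f x) + \<sigma> (f x)) \<in> zspan P"
      by (rule zspan_diff[OF zspan.zspan_neg[OF zspan_neg.IH] \<sigma>_neg])
    then show ?case
      by (simp add: additive_on_zspan_neg[OF add zspan_neg.hyps] algebra_simps)
  qed
qed

lemma kernel_eq_zspan_by_section:
  fixes f :: "'a::ab_group_add \<Rightarrow> 'b::ab_group_add" and \<sigma> :: "'b \<Rightarrow> 'a"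
  assumes add: "\<And>x y. x \<in> zspan Y \<Longrightarrow> y \<in> zspan Y \<Longrightarrow> f (x + y) = f x + f y"
    and \<sigma>_add: "\<And>u v. \<sigma> (u + v) - \<sigma> u - \<sigma> v \<in> zspan P"
    and gen: "\<And>y. y \<in> Y \<Longrightarrow> y - \<sigma> (f y) \<in> zspan P"
    and P: "\<And>x. x \<in> P \<Longrightarrow> x \<in> zspan Y \<and> f x = 0"
  shows "{y \<in> zspan Y. f y = 0} = zspan P"
proof
  show "{y \<in> zspan Y. f y = 0} \<subseteq> zspan P"
  proof
    fix y assume y: "y \<in> {y \<in> zspan Y. f y = 0}"
    have "y - \<sigma> 0 \<in> zspan P"
      using zspan_congruent_section[OF add \<sigma>_add gen] y by fastforce
    from zspan.zspan_add[OF this zspan_neg[OF \<sigma>_add[of 0 0]]]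
    show "y \<in> zspan P"
      by simp
  qed
  show "zspan P \<subseteq> {y \<in> zspan Y. f y = 0}"
    by (rule zspan_subset_kernel[OF add P])
qed

lemma avec_in_Hg: "i < g \<Longrightarrow> avec i \<in> Hg g"
  unfolding Hg_def avec_def evec_def by auto

lemma bvec_in_Hg: "i < g \<Longrightarrow> bvec g i \<in> Hg g"
  unfolding Hg_def bvec_def evec_def by auto

lemma br21_eq_neg_br12: "br21 u x = - br12 x u"
  by (simp add: fun_eq_iff br21_def br12_def)

lemma br12_br11_in_L3: "x \<in> Hg g \<Longrightarrow> y \<in> Hg g \<Longrightarrow> z \<in> Hg g \<Longrightarrow> br12 x (br11 y z) \<in> L3 g"
  unfolding L3_def by (rule zspan_gen) blast

lemma tens13_in_HL3: "h \<in> Hg g \<Longrightarrow> u \<in> L3 g \<Longrightarrow> tens13 h u \<in> HL3 g"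
  unfolding HL3_def by (rule zspan_gen) blast

lemma L3_neg: "u \<in> L3 g \<Longrightarrow> - u \<in> L3 g"
  unfolding L3_def by (rule zspan_neg)

lemma HL3_add: "u \<in> HL3 g \<Longrightarrow> v \<in> HL3 g \<Longrightarrow> u + v \<in> HL3 g"
  unfolding HL3_def by (rule zspan_add)

lemma brk4_Tel: "brk4 (Tel a b c d) = 0"
  unfolding brk4_def Tel_def tens13_def br12_def br21_def br11_def
  by (rule ext)+ (simp add: algebra_simps)

lemma brk4_odot: "brk4 (odot a b) = 0"
  unfolding brk4_def odot_def tens13_def br12_def br21_def br11_def
  by (rule ext)+ (simp add: algebra_simps)

lemma Tel_in_D2:
  assumes "a \<in> Hg g" "b \<in> Hg g" "c \<in> Hg g" "d \<in> Hg g"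
  shows "Tel a b c d \<in> D2 g"
  unfolding D2_def using assms
  by (simp add: brk4_Tel)
    (auto simp: Tel_def br21_eq_neg_br12 intro!: HL3_add tens13_in_HL3 L3_neg br12_br11_in_L3)

lemma odot_in_D2:
  assumes "a \<in> Hg g" "b \<in> Hg g"
  shows "odot a b \<in> D2 g"
  unfolding D2_def using assms
  by (simp add: brk4_odot)
    (auto simp: odot_def br21_eq_neg_br12 intro!: HL3_add tens13_in_HL3 L3_neg br12_br11_in_L3)

lemma Tel_swap_left: "Tel b a c d = - Tel a b c d"
  unfolding Tel_def tens13_def br12_def br21_def br11_def
  by (rule ext)+ (simp add: algebra_simps)

lemma Tel_same_left: "Tel a a c d = 0"
  unfolding Tel_def tens13_def br12_def br21_def br11_def
  by (rule ext)+ (simp add: algebra_simps)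

lemma Tel_jacobi: "Tel a b c d = Tel a d c b - Tel b d c a"
  unfolding Tel_def tens13_def br12_def br21_def br11_def
  by (rule ext)+ (simp add: algebra_simps)

lemma odot_commute: "odot b a = odot a b"
  unfolding odot_def tens13_def br12_def br21_def br11_def
  by (rule ext)+ (simp add: algebra_simps)

lemma odot_self: "odot a a = 0"
  unfolding odot_def tens13_def br12_def br21_def br11_def
  by (rule ext)+ (simp add: algebra_simps)

lemma D2_subgroup:
  "0 \<in> D2 g" "x \<in> D2 g \<Longrightarrow> y \<in> D2 g \<Longrightarrow> x + y \<in> D2 g" "x \<in> D2 g \<Longrightarrow> - x \<in> D2 g"
  unfolding D2_def HL3_def brk4_def
  by (auto simp: fun_eq_iff intro: zspan.intros)

lemma Ysub_subset_D2: "Ysub g \<subseteq> D2 g"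
  unfolding Ysub_def
  by (rule zspan_subset_subgroup[OF _ D2_subgroup])
    (auto simp: Ygens_def seven_def eight_def
      intro!: Tel_in_D2 odot_in_D2 avec_in_Hg bvec_in_Hg)

lemma Tel_avec_in_Ysub:
  "i < g \<Longrightarrow> j < g \<Longrightarrow> k < g \<Longrightarrow> l < g \<Longrightarrow> Tel (avec i) (avec j) (avec k) (avec l) \<in> Ysub g"
  unfolding Ysub_def Ygens_def by (rule zspan_gen) blast

lemma seven_in_Ysub: "i < g \<Longrightarrow> j < g \<Longrightarrow> k < g \<Longrightarrow> l < g \<Longrightarrow> seven g i j k l \<in> Ysub g"
  unfolding Ysub_def Ygens_def by (rule zspan_gen) blast

lemma eight_in_Ysub: "i < g \<Longrightarrow> j < g \<Longrightarrow> i \<noteq> j \<Longrightarrow> eight i j \<in> Ysub g"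
  unfolding Ysub_def Ygens_def by (rule zspan_gen) blast

lemma seven_same_left: "seven g i i k l = 0"
  unfolding seven_def by (rule Tel_same_left)

lemma seven_swap_left: "seven g k j k l = - seven g j k k l"
  unfolding seven_def by (rule Tel_swap_left)

lemma seven_jacobi: "seven g i j k k = seven g i k k j - seven g j k k i"
  unfolding seven_def by (rule Tel_jacobi)

lemma eight_self: "eight i i = 0"
  unfolding eight_def by (rule odot_self)

lemma eight_commute: "eight j i = eight i j"
  unfolding eight_def by (rule odot_commute)

lemma lam2_add_self: "(M::lam2) + M = 0"
  by (simp add: fun_eq_iff)

lemma lam2_minus: "- (M::lam2) = M"
  by (simp add: fun_eq_iff)

lemma wedge2_self: "wedge2 u u = 0"
  by (rule ext)+ (auto simp: wedge2_def)

lemma wedge2_commute: "wedge2 v u = wedge2 u v"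
  by (rule ext)+ (simp add: wedge2_def mult.commute add.commute del: add_bit_eq_xor)

lemma omega_avec_avec: "i < g \<Longrightarrow> l < g \<Longrightarrow> omega g (avec i) (avec l) = 0"
  unfolding omega_def avec_def evec_def by (intro sum.neutral) auto

lemma omega_avec_bvec:
  assumes "i < g" "k < g"
  shows "omega g (avec i) (bvec g k) = of_bool (i = k)"
proof -
  have "omega g (avec i) (bvec g k) = (\<Sum>m<g. if m = i then of_bool (i = k) else 0)"
    unfolding omega_def avec_def bvec_def evec_def using assms by (intro sum.cong) auto
  then show ?thesis
    using assms by simp
qed

lemma smul2_zero: "smul2 0 M = 0"
  by (rule ext)+ (simp add: smul2_def)

lemma smul2_one: "smul2 1 M = M"
  by (rule ext)+ (simp add: smul2_def)

lemma smul2_of_bool: "smul2 (of_bool b) M = (if b then M else 0)"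
  by (simp add: smul2_zero smul2_one)

lemma Tr_as_add: "is_Tr_as g tr \<Longrightarrow> s \<in> D2 g \<Longrightarrow> t \<in> D2 g \<Longrightarrow> tr (s + t) = tr s + tr t"
  unfolding is_Tr_as_def by blast

lemma Tr_as_Tel:
  assumes "is_Tr_as g tr" "a \<in> Hg g" "b \<in> Hg g" "c \<in> Hg g" "d \<in> Hg g"
  shows "tr (Tel a b c d) =
      smul2 (omega g a d) (wedge2 b c) + smul2 (omega g a c) (wedge2 b d)
    + smul2 (omega g b d) (wedge2 a c) + smul2 (omega g b c) (wedge2 a d)"
  using assms unfolding is_Tr_as_def by blast

lemma Tr_as_odot:
  assumes "is_Tr_as g tr" "a \<in> Hg g" "b \<in> Hg g"
  shows "tr (odot a b) = smul2 (1 + omega g a b) (wedge2 a b)"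
  using assms unfolding is_Tr_as_def by blast

lemma Tr_as_Tel_avec:
  assumes "is_Tr_as g tr" "i < g" "j < g" "k < g" "l < g"
  shows "tr (Tel (avec i) (avec j) (avec k) (avec l)) = 0"
  using assms by (simp only: Tr_as_Tel avec_in_Hg omega_avec_avec smul2_zero add_0_right)

lemma Tr_as_seven:
  assumes "is_Tr_as g tr" "i < g" "j < g" "k < g" "l < g"
  shows "tr (seven g i j k l) =
    (if i = k then wedge2 (avec j) (avec l) else 0) + (if j = k then wedge2 (avec i) (avec l) else 0)"
  using assms unfolding seven_def
  by (simp only: Tr_as_Tel avec_in_Hg bvec_in_Hg omega_avec_avec omega_avec_bvec
      smul2_zero smul2_of_bool add_0_left add_0_right)

lemma Tr_as_eight:
  assumes "is_Tr_as g tr" "i < g" "j < g"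
  shows "tr (eight i j) = wedge2 (avec i) (avec j)"
  using assms unfolding eight_def
  by (simp only: Tr_as_odot avec_in_Hg omega_avec_avec add_0_right smul2_one)

lemma Tr_as_seven_ikkl:
  assumes "is_Tr_as g tr" "i < g" "k < g" "l < g" "i \<noteq> k"
  shows "tr (seven g i k k l) = wedge2 (avec i) (avec l)"
  using assms by (simp add: Tr_as_seven)

lemma Tr_as_add_Ysub:
  assumes "is_Tr_as g tr" "x \<in> zspan (Ygens g)" "y \<in> zspan (Ygens g)"
  shows "tr (x + y) = tr x + tr y"
  using assms Ysub_subset_D2 Tr_as_add unfolding Ysub_def by blast

lemma sum_diff_in_kernel:
  assumes tr: "is_Tr_as g tr" and xy: "x \<in> Ysub g" "y \<in> Ysub g" and eq: "tr x = tr y"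
  shows "x + y \<in> Ysub g \<and> tr (x + y) = 0" "x - y \<in> Ysub g \<and> tr (x - y) = 0"
proof -
  note add = Tr_as_add_Ysub[OF tr]
  have "tr (- y) = - tr y"
    by (rule additive_on_zspan_neg[where f = tr and S = "Ygens g"])
      (use add xy(2) in \<open>simp_all add: Ysub_def\<close>)
  then have "tr (- y) = tr y"
    by (simp add: lam2_minus)
  then show "x + y \<in> Ysub g \<and> tr (x + y) = 0" "x - y \<in> Ysub g \<and> tr (x - y) = 0"
    using xy eq add[of x y] add[of x "- y"] unfolding Ysub_def
    by (auto intro: zspan.intros zspan_diff simp: lam2_add_self)
qed

lemma Pgens_in_kernel:
  assumes tr: "is_Tr_as g tr" and x: "x \<in> Pgens g"
  shows "x \<in> Ysub g \<and> tr x = 0"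
  using x unfolding Pgens_def
  by (elim UnE CollectE exE conjE)
    (simp_all add: sum_diff_in_kernel[OF tr] Tel_avec_in_Ysub seven_in_Ysub eight_in_Ysub
      Tr_as_Tel_avec[OF tr] Tr_as_seven[OF tr] Tr_as_seven_ikkl[OF tr] Tr_as_eight[OF tr]
      wedge2_self wedge2_commute)

lemma Tel_avec_in_Pgens:
  "i < g \<Longrightarrow> j < g \<Longrightarrow> k < g \<Longrightarrow> l < g \<Longrightarrow> Tel (avec i) (avec j) (avec k) (avec l) \<in> Pgens g"
  unfolding Pgens_def by (intro UnI1 UnI2) blast

lemma seven_in_Pgens:
  "i < g \<Longrightarrow> j < g \<Longrightarrow> k < g \<Longrightarrow> l < g \<Longrightarrow> k \<notin> {i, j, l} \<Longrightarrow> seven g i j k l \<in> Pgens g"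
  unfolding Pgens_def by (intro UnI1 UnI2) blast

lemma seven_ikki_in_Pgens: "i < g \<Longrightarrow> k < g \<Longrightarrow> i \<noteq> k \<Longrightarrow> seven g i k k i \<in> Pgens g"
  unfolding Pgens_def by (intro UnI1 UnI2) blast

lemma seven_ikkm_minus_seven_mkki_in_Pgens:
  "i < g \<Longrightarrow> k < g \<Longrightarrow> m < g \<Longrightarrow> i \<noteq> k \<Longrightarrow> m \<noteq> k \<Longrightarrow>
    seven g i k k m - seven g m k k i \<in> Pgens g"
  unfolding Pgens_def by (intro UnI1 UnI2) blast

lemma seven_ikkl_pm_eight_in_Pgens:
  assumes "i < g" "k < g" "l < g" "i \<notin> {k, l}"
  shows "seven g i k k l + eight i l \<in> Pgens g"
    and "seven g i k k l - eight i l \<in> Pgens g"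
  using assms unfolding Pgens_def by (intro UnI1 UnI2; blast)+

definition wedge_lift :: "nat \<Rightarrow> lam2 \<Rightarrow> ten4" where
  "wedge_lift g M = (\<Sum>q<g. \<Sum>p<q. if M p q = 1 then eight p q else 0)"

lemma eight_double_in_P:
  assumes "i < g" "l < g"
  shows "eight i l + eight i l \<in> zspan (Pgens g)"
proof (cases "i = l")
  case True
  then show ?thesis by (simp add: eight_self zspan_zero)
next
  case False
  then have "seven g i l l l + eight i l \<in> Pgens g" "seven g i l l l - eight i l \<in> Pgens g"
    using assms seven_ikkl_pm_eight_in_Pgens[of i g l l] by auto
  from zspan_diff[OF this[THEN zspan_gen]] show ?thesis
    by simp
qed

lemma wedge_lift_add: "wedge_lift g (M + N) - wedge_lift g M - wedge_lift g N \<in> zspan (Pgens g)"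
proof -
  have "wedge_lift g (M + N) - wedge_lift g M - wedge_lift g N =
     (\<Sum>q<g. \<Sum>p<q. (if (M + N) p q = 1 then eight p q else 0)
        - (if M p q = 1 then eight p q else 0) - (if N p q = 1 then eight p q else 0))"
    unfolding wedge_lift_def by (simp add: sum_subtractf del: add_bit_eq_xor)
  also have "\<dots> \<in> zspan (Pgens g)"
  proof (intro zspan_sum finite_lessThan)
    fix q p assume "q \<in> {..<g}" "p \<in> {..<q}"
    then have "- (eight p q + eight p q) \<in> zspan (Pgens g)"
      by (intro zspan_neg eight_double_in_P) auto
    then show "(if (M + N) p q = 1 then eight p q else 0) - (if M p q = 1 then eight p q else 0)
        - (if N p q = 1 then eight p q else 0) \<in> zspan (Pgens g)"
      by (cases "M p q"; cases "N p q"; simp add: zspan_zero)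
  qed
  finally show ?thesis .
qed

lemma wedge_lift_zero: "wedge_lift g 0 = 0"
  unfolding wedge_lift_def by simp

lemma wedge_lift_wedge2_avec:
  assumes "i < g" "l < g"
  shows "wedge_lift g (wedge2 (avec i) (avec l)) = eight i l"
proof -
  have entry: "wedge2 (avec i) (avec l) p q = 1 \<longleftrightarrow> p = min i l \<and> q = max i l" if "p < q" for p q
    using that unfolding wedge2_def avec_def evec_def by (auto simp: min_def max_def)
  have "wedge_lift g (wedge2 (avec i) (avec l)) =
     (\<Sum>q<g. if q = max i l then (\<Sum>p<q. if p = min i l then eight i l else 0) else 0)"
    unfolding wedge_lift_def
    by (intro sum.cong refl)
      (auto simp: entry eight_commute min_def max_def intro!: sum.neutral sum.cong)
  also have "\<dots> = eight i l"
    using assms by (cases "i = l") (auto simp: eight_self min_def max_def)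
  finally show ?thesis .
qed

lemma seven_off_diagonal_in_P:
  assumes "i < g" "j < g" "k < g" "l < g" "k \<noteq> i" "k \<noteq> j"
  shows "seven g i j k l \<in> zspan (Pgens g)"
proof (cases "k = l")
  case True
  have "seven g i k k j - seven g j k k i \<in> zspan (Pgens g)"
    using assms by (intro zspan_gen seven_ikkm_minus_seven_mkki_in_Pgens) auto
  then show ?thesis
    using True seven_jacobi by simp
qed (use assms in \<open>auto intro: zspan_gen seven_in_Pgens\<close>)

lemma seven_ikkl_pm_eight_in_P:
  assumes "i < g" "k < g" "l < g" "i \<noteq> k"
  shows "seven g i k k l + eight i l \<in> zspan (Pgens g)"
    and "seven g i k k l - eight i l \<in> zspan (Pgens g)"
  using assms seven_ikkl_pm_eight_in_Pgens[of i g k l]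
  by (cases "l = i"; auto simp: eight_self intro: zspan_gen seven_ikki_in_Pgens)+

lemma seven_congr_eight:
  assumes "i < g" "j < g" "k < g" "l < g"
  shows "seven g i j k l - (if i = k then eight j l else 0) - (if j = k then eight i l else 0)
           \<in> zspan (Pgens g)"
proof -
  consider "i = j" | "i \<noteq> j" "k \<noteq> i" "k \<noteq> j" | "i \<noteq> j" "k = i" | "i \<noteq> j" "k = j"
    by blast
  then show ?thesis
  proof cases
    case 1
    then show ?thesis
      using assms zspan_neg[OF eight_double_in_P[of i g l]]
      by (cases "i = k") (simp_all add: seven_same_left zspan_zero)
  next
    case 2
    then show ?thesis
      using assms seven_off_diagonal_in_P by simp
  next
    case 3
    then show ?thesis
      using assms zspan_neg[OF seven_ikkl_pm_eight_in_P(1)[of j g k l]]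
      by (simp add: seven_swap_left)
  next
    case 4
    then show ?thesis
      using assms seven_ikkl_pm_eight_in_P(2) by simp
  qed
qed

lemma Ygens_congr_wedge_lift:
  assumes tr: "is_Tr_as g tr" and y: "y \<in> Ygens g"
  shows "y - wedge_lift g (tr y) \<in> zspan (Pgens g)"
  using y unfolding Ygens_def
proof (elim UnE CollectE exE conjE)
  fix i j k l assume "y = Tel (avec i) (avec j) (avec k) (avec l)" "i < g" "j < g" "k < g" "l < g"
  then show ?thesis
    by (simp add: Tr_as_Tel_avec[OF tr] wedge_lift_zero zspan_gen Tel_avec_in_Pgens)
next
  fix i j k l assume y: "y = seven g i j k l" and ijkl: "i < g" "j < g" "k < g" "l < g"
  define A where "A = (if i = k then wedge2 (avec j) (avec l) else 0)"
  define B where "B = (if j = k then wedge2 (avec i) (avec l) else 0)"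
  have "wedge_lift g A = (if i = k then eight j l else 0)"
    "wedge_lift g B = (if j = k then eight i l else 0)"
    unfolding A_def B_def using ijkl by (simp_all add: wedge_lift_wedge2_avec wedge_lift_zero)
  then have "y - wedge_lift g A - wedge_lift g B \<in> zspan (Pgens g)"
    unfolding y by (simp only: seven_congr_eight[OF ijkl])
  from zspan_diff[OF this wedge_lift_add[of g A B]]
  show ?thesis
    unfolding y Tr_as_seven[OF tr ijkl] A_def[symmetric] B_def[symmetric] by simp
next
  fix i j assume "y = eight i j" "i < g" "j < g"
  then show ?thesis
    by (simp add: Tr_as_eight[OF tr] wedge_lift_wedge2_avec zspan_zero)
qed

theorem proposition5p7:
  fixes g :: nat and tr :: "ten4 \<Rightarrow> lam2"
  assumes "g \<ge> 2" and "is_Tr_as g tr"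
  shows "{y \<in> Ysub g. tr y = 0} = zspan (Pgens g)"
  unfolding Ysub_def
proof (rule kernel_eq_zspan_by_section)
  show "tr (x + y) = tr x + tr y" if "x \<in> zspan (Ygens g)" "y \<in> zspan (Ygens g)" for x y
    using Tr_as_add_Ysub[OF assms(2) that] .
  show "wedge_lift g (u + v) - wedge_lift g u - wedge_lift g v \<in> zspan (Pgens g)" for u v
    by (rule wedge_lift_add)
  show "y - wedge_lift g (tr y) \<in> zspan (Pgens g)" if "y \<in> Ygens g" for y
    using Ygens_congr_wedge_lift[OF assms(2) that] .
  show "x \<in> zspan (Ygens g) \<and> tr x = 0" if "x \<in> Pgens g" for x
    using Pgens_in_kernel[OF assms(2) that] unfolding Ysub_def .
qed

end
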